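(* Let $T$ be the weighted shift on $\ell^2$ associated to a bounded complex sequence $(a_j)_{j\ge1}$. If both $T$ and its mean transform $M(T)$ are $2$-isometries, then $T$ is an isometry, and in particular $T=\Delta(T)=M(T)$.
   Context: $\ell^2$ has canonical basis $(e_j)_{j\ge1}$; the weighted shift associated to $(a_j)$ is the operator with $Te_j=a_je_{j+1}$. For $T\in B(H)$ with polar decomposition $T=V|T|$ ($|T|=(T^*T)^{1/2}$, $V$ the partial isometry with $\ker V=\ker T$), the Aluthge transform is $\Delta(T)=|T|^{1/2}V|T|^{1/2}$ and the mean transform is $M(T)=\frac12(|T|V+V|T|)$. $T$ is a $2$-isometry if $\|x\|^2-2\|Tx\|^2+\|T^2x\|^2=0$ for all $x\in H$. *)

theory Defs
  imports "HOL-Analysis.Analysis"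
begin

text \<open>The Hilbert space l2 is modelled as the set of square-summable sequences
  nat \<Rightarrow> complex (index 0 plays the role of index 1 of the paper).
  Operators are functions on sequences; only their action on l2 matters.\<close>

definition l2 :: "(nat \<Rightarrow> complex) set" where
  "l2 = {x. summable (\<lambda>n. (cmod (x n))\<^sup>2)}"

definition l2inner :: "(nat \<Rightarrow> complex) \<Rightarrow> (nat \<Rightarrow> complex) \<Rightarrow> complex" where
  "l2inner x y = (\<Sum>n. x n * cnj (y n))"

definition l2norm :: "(nat \<Rightarrow> complex) \<Rightarrow> real" where
  "l2norm x = sqrt (\<Sum>n. (cmod (x n))\<^sup>2)"

definition bdd_op :: "((nat \<Rightarrow> complex) \<Rightarrow> (nat \<Rightarrow> complex)) \<Rightarrow> bool" where
  "bdd_op A \<longleftrightarrow>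
     (\<forall>x\<in>l2. A x \<in> l2) \<and>
     (\<forall>x\<in>l2. \<forall>y\<in>l2. A (\<lambda>n. x n + y n) = (\<lambda>n. A x n + A y n)) \<and>
     (\<forall>x\<in>l2. \<forall>c. A (\<lambda>n. c * x n) = (\<lambda>n. c * A x n)) \<and>
     (\<exists>C. \<forall>x\<in>l2. l2norm (A x) \<le> C * l2norm x)"

definition is_adjoint :: "((nat \<Rightarrow> complex) \<Rightarrow> (nat \<Rightarrow> complex)) \<Rightarrow> ((nat \<Rightarrow> complex) \<Rightarrow> (nat \<Rightarrow> complex)) \<Rightarrow> bool" where
  "is_adjoint A B \<longleftrightarrow> bdd_op A \<and> bdd_op B \<and>
     (\<forall>x\<in>l2. \<forall>y\<in>l2. l2inner (A x) y = l2inner x (B y))"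

text \<open>Positive operator: \<langle>Px,x\<rangle> \<ge> 0 for all x (self-adjoint on a complex space).\<close>
definition positive_op :: "((nat \<Rightarrow> complex) \<Rightarrow> (nat \<Rightarrow> complex)) \<Rightarrow> bool" where
  "positive_op P \<longleftrightarrow> bdd_op P \<and>
     (\<forall>x\<in>l2. Im (l2inner (P x) x) = 0 \<and> Re (l2inner (P x) x) \<ge> 0)"

definition is_pos_sqrt :: "((nat \<Rightarrow> complex) \<Rightarrow> (nat \<Rightarrow> complex)) \<Rightarrow> ((nat \<Rightarrow> complex) \<Rightarrow> (nat \<Rightarrow> complex)) \<Rightarrow> bool" where
  "is_pos_sqrt Q P \<longleftrightarrow> positive_op Q \<and> (\<forall>x\<in>l2. Q (Q x) = P x)"

definition is_modulus :: "((nat \<Rightarrow> complex) \<Rightarrow> (nat \<Rightarrow> complex)) \<Rightarrow> ((nat \<Rightarrow> complex) \<Rightarrow> (nat \<Rightarrow> complex)) \<Rightarrow> bool" where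
  "is_modulus P T \<longleftrightarrow> (\<exists>S. is_adjoint T S \<and> is_pos_sqrt P (\<lambda>x. S (T x)))"

definition partial_isometry :: "((nat \<Rightarrow> complex) \<Rightarrow> (nat \<Rightarrow> complex)) \<Rightarrow> bool" where
  "partial_isometry V \<longleftrightarrow> bdd_op V \<and>
     (\<forall>x\<in>l2. (\<forall>y\<in>l2. V y = (\<lambda>n. 0) \<longrightarrow> l2inner x y = 0) \<longrightarrow> l2norm (V x) = l2norm x)"

definition polar_decomp :: "((nat \<Rightarrow> complex) \<Rightarrow> (nat \<Rightarrow> complex)) \<Rightarrow> ((nat \<Rightarrow> complex) \<Rightarrow> (nat \<Rightarrow> complex)) \<Rightarrow> ((nat \<Rightarrow> complex) \<Rightarrow> (nat \<Rightarrow> complex)) \<Rightarrow> bool" where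
  "polar_decomp T V P \<longleftrightarrow> is_modulus P T \<and> partial_isometry V \<and>
     (\<forall>x\<in>l2. V x = (\<lambda>n. 0) \<longleftrightarrow> T x = (\<lambda>n. 0)) \<and>
     (\<forall>x\<in>l2. T x = V (P x))"

text \<open>Aluthge transform |T|^(1/2) V |T|^(1/2), with Q = |T|^(1/2).\<close>
definition aluthge :: "((nat \<Rightarrow> complex) \<Rightarrow> (nat \<Rightarrow> complex)) \<Rightarrow> ((nat \<Rightarrow> complex) \<Rightarrow> (nat \<Rightarrow> complex)) \<Rightarrow> (nat \<Rightarrow> complex) \<Rightarrow> (nat \<Rightarrow> complex)" where
  "aluthge V Q = (\<lambda>x. Q (V (Q x)))"

text \<open>Mean transform (|T| V + V |T|)/2, with P = |T|.\<close>
definition mean_tr :: "((nat \<Rightarrow> complex) \<Rightarrow> (nat \<Rightarrow> complex)) \<Rightarrow> ((nat \<Rightarrow> complex) \<Rightarrow> (nat \<Rightarrow> complex)) \<Rightarrow> (nat \<Rightarrow> complex) \<Rightarrow> (nat \<Rightarrow> complex)" where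
  "mean_tr V P = (\<lambda>x. (\<lambda>n. (P (V x) n + V (P x) n) / 2))"

text \<open>Weighted shift T e_j = a_j e_{j+1}.\<close>
definition wshift :: "(nat \<Rightarrow> complex) \<Rightarrow> (nat \<Rightarrow> complex) \<Rightarrow> (nat \<Rightarrow> complex)" where
  "wshift a x = (\<lambda>n. if n = 0 then 0 else a (n - 1) * x (n - 1))"

definition two_isometry :: "((nat \<Rightarrow> complex) \<Rightarrow> (nat \<Rightarrow> complex)) \<Rightarrow> bool" where
  "two_isometry T \<longleftrightarrow>
     (\<forall>x\<in>l2. (l2norm x)\<^sup>2 - 2 * (l2norm (T x))\<^sup>2 + (l2norm (T (T x)))\<^sup>2 = 0)"

definition isometry_op :: "((nat \<Rightarrow> complex) \<Rightarrow> (nat \<Rightarrow> complex)) \<Rightarrow> bool" where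
  "isometry_op T \<longleftrightarrow> (\<forall>x\<in>l2. l2norm (T x) = l2norm x)"

end

theory Submission
  imports Defs
begin

text \<open>On the basis vectors the weighted shift acts by T e(n) = a(n) e(n+1), so testing the
  2-isometry identity at e(n) gives 1 - 2 r(n)^2 + r(n)^2 r(n+1)^2 = 0 for r(n) = |a(n)|;
  in particular no weight vanishes. Then |T| = diag(r(n)) and V e(n) = sgn(a(n)) e(n+1), so M(T)
  is again a weighted shift, with weights of modulus m(n) = (r(n) + r(n+1))/2, and satisfies the
  same recursion. The recursion reads r(n+1)^2 = 2 - 1/r(n)^2; since t \<mapsto> 1/t^2 is convex,
  the means can only satisfy it if r(n+1) = r(n+2), which forces r(n) = 1. Hence |T| and its
  square root are the identity, V = T, and all three operators coincide.\<close>

definition basis_seq :: "nat \<Rightarrow> complex \<Rightarrow> nat \<Rightarrow> complex" where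
  "basis_seq j c = (\<lambda>k. if k = j then c else 0)"

lemma suminf_single: "(\<Sum>n. if n = j then f n else 0) = (f j :: 'a::{t2_space,comm_monoid_add})"
  using sums_single sums_unique by metis

lemma basis_seq_l2: "basis_seq j c \<in> l2"
  unfolding l2_def basis_seq_def by (simp add: if_distrib[of "\<lambda>z. (cmod z)\<^sup>2"] cong: if_cong)

lemma l2norm_basis_seq: "l2norm (basis_seq j c) = cmod c"
  unfolding l2norm_def basis_seq_def
  by (simp add: if_distrib[of "\<lambda>z. (cmod z)\<^sup>2"] suminf_single cong: if_cong)

lemma l2inner_basis_seq: "l2inner (basis_seq j c) y = c * cnj (y j)"
proof -
  have "(\<lambda>n. basis_seq j c n * cnj (y n)) = (\<lambda>n. if n = j then c * cnj (y j) else 0)"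
    by (auto simp: basis_seq_def)
  then show ?thesis unfolding l2inner_def by (simp add: suminf_single)
qed

lemma scale_basis_seq: "(\<lambda>n. d * basis_seq j c n) = basis_seq j (d * c)"
  by (auto simp: basis_seq_def)

lemma bdd_op_basis_seq: "bdd_op A \<Longrightarrow> A (basis_seq j c) = (\<lambda>n. c * A (basis_seq j 1) n)"
  unfolding bdd_op_def using basis_seq_l2 scale_basis_seq[of c j 1] by (metis mult_1_right)

lemma bdd_op_basis_seq_image:
  "bdd_op A \<Longrightarrow> A (basis_seq j 1) = basis_seq i d \<Longrightarrow> A (basis_seq j c) = basis_seq i (c * d)"
  using bdd_op_basis_seq scale_basis_seq by metis

lemma l2_add: "x \<in> l2 \<Longrightarrow> y \<in> l2 \<Longrightarrow> (\<lambda>n. x n + y n) \<in> l2"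
proof -
  assume x: "x \<in> l2" and y: "y \<in> l2"
  have "summable (\<lambda>n. 2 * (cmod (x n))\<^sup>2 + 2 * (cmod (y n))\<^sup>2)"
    using x y unfolding l2_def by (intro summable_add summable_mult) auto
  moreover have "norm ((cmod (x n + y n))\<^sup>2) \<le> 2 * (cmod (x n))\<^sup>2 + 2 * (cmod (y n))\<^sup>2" for n
  proof -
    have "(cmod (x n + y n))\<^sup>2 \<le> (cmod (x n) + cmod (y n))\<^sup>2"
      by (simp add: power_mono norm_triangle_ineq)
    also have "\<dots> \<le> 2 * (cmod (x n))\<^sup>2 + 2 * (cmod (y n))\<^sup>2"
      using sum_squares_bound[of "cmod (x n)" "cmod (y n)"] by (simp add: power2_eq_square algebra_simps)
    finally show ?thesis by simp
  qed
  ultimately show ?thesis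
    unfolding l2_def by (simp add: summable_comparison_test')
qed

lemma l2_scale: "x \<in> l2 \<Longrightarrow> (\<lambda>n. c * x n) \<in> l2"
  unfolding l2_def by (simp add: norm_mult power_mult_distrib summable_mult)

lemma power2_l2norm: "x \<in> l2 \<Longrightarrow> (l2norm x)\<^sup>2 = (\<Sum>n. (cmod (x n))\<^sup>2)"
  unfolding l2norm_def l2_def by (simp add: suminf_nonneg)

lemma l2norm_eq_0D: "x \<in> l2 \<Longrightarrow> l2norm x = 0 \<Longrightarrow> x = (\<lambda>n. 0)"
  using power2_l2norm[of x] suminf_eq_zero_iff[of "\<lambda>n. (cmod (x n))\<^sup>2"]
  unfolding l2_def by fastforce

lemma l2inner_scale_self:
  assumes "x \<in> l2"
  shows "l2inner (\<lambda>n. c * x n) x = c * complex_of_real ((l2norm x)\<^sup>2)"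
proof -
  have s: "summable (\<lambda>n. (cmod (x n))\<^sup>2)" using assms unfolding l2_def by simp
  have "(\<lambda>n. c * x n * cnj (x n)) = (\<lambda>n. c * complex_of_real ((cmod (x n))\<^sup>2))"
    by (rule ext) (metis complex_norm_square mult.assoc)
  hence "l2inner (\<lambda>n. c * x n) x = (\<Sum>n. c * complex_of_real ((cmod (x n))\<^sup>2))"
    unfolding l2inner_def by simp
  also have "\<dots> = c * complex_of_real (\<Sum>n. (cmod (x n))\<^sup>2)"
    using suminf_mult[OF summable_of_real[OF s, where 'a=complex]] suminf_of_real[OF s, where 'a=complex]
    by (simp del: of_real_power)
  finally show ?thesis using power2_l2norm[OF assms] by simp
qed

text \<open>If P (P x) = mu^2 x, then z = P x - mu x satisfies P z = - mu z, which positivity of P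
  only allows for z = 0.\<close>

lemma positive_op_sqrt_eigenvector:
  assumes P: "positive_op P" and x: "x \<in> l2" and mu: "\<mu> > 0"
    and eq: "P (P x) = (\<lambda>n. complex_of_real (\<mu>\<^sup>2) * x n)"
  shows "P x = (\<lambda>n. complex_of_real \<mu> * x n)"
proof -
  have b: "bdd_op P" using P unfolding positive_op_def by simp
  have Px: "P x \<in> l2" using b x unfolding bdd_op_def by simp
  have mx: "(\<lambda>n. - complex_of_real \<mu> * x n) \<in> l2" using l2_scale[OF x] .
  define z where "z = (\<lambda>n. P x n + - complex_of_real \<mu> * x n)"
  have z: "z \<in> l2" unfolding z_def using l2_add[OF Px mx] .
  have additive: "\<forall>x\<in>l2. \<forall>y\<in>l2. P (\<lambda>n. x n + y n) = (\<lambda>n. P x n + P y n)"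
    using b unfolding bdd_op_def by blast
  have "P z = (\<lambda>n. P (P x) n + P (\<lambda>n. - complex_of_real \<mu> * x n) n)"
    unfolding z_def by (rule additive[rule_format, OF Px mx])
  also have "P (\<lambda>n. - complex_of_real \<mu> * x n) = (\<lambda>n. - complex_of_real \<mu> * P x n)"
    using b x unfolding bdd_op_def by blast
  finally have Pz: "P z = (\<lambda>n. - complex_of_real \<mu> * z n)"
    unfolding eq z_def by (simp add: algebra_simps power2_eq_square)
  have "0 \<le> Re (l2inner (P z) z)" using P z unfolding positive_op_def by blast
  also have "l2inner (P z) z = - complex_of_real \<mu> * complex_of_real ((l2norm z)\<^sup>2)"
    unfolding Pz using l2inner_scale_self[OF z] .
  finally have "l2norm z = 0" using mu by (simp add: mult_le_0_iff)
  hence "z = (\<lambda>n. 0)" using l2norm_eq_0D[OF z] by simp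
  thus ?thesis unfolding z_def by (auto simp: add_eq_0_iff fun_eq_iff)
qed

lemma positive_op_square_id:
  "positive_op P \<Longrightarrow> x \<in> l2 \<Longrightarrow> P (P x) = x \<Longrightarrow> P x = x"
  using positive_op_sqrt_eigenvector[of P x 1] by simp

lemma wshift_basis_seq: "wshift a (basis_seq j c) = basis_seq (Suc j) (a j * c)"
  by (rule ext) (auto simp: wshift_def basis_seq_def)

lemma adjoint_wshift_apply:
  assumes "is_adjoint (wshift a) S" and y: "y \<in> l2"
  shows "S y n = cnj (a n) * y (Suc n)"
proof -
  have "l2inner (wshift a (basis_seq n 1)) y = l2inner (basis_seq n 1) (S y)"
    using assms basis_seq_l2 unfolding is_adjoint_def by blast
  hence "a n * cnj (y (Suc n)) = cnj (S y n)"
    by (simp add: wshift_basis_seq l2inner_basis_seq)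
  thus ?thesis by (metis complex_cnj_cnj complex_cnj_mult)
qed

lemma modulus_wshift_square:
  assumes "is_modulus P (wshift a)" and x: "x \<in> l2"
  shows "P (P x) = (\<lambda>n. complex_of_real ((cmod (a n))\<^sup>2) * x n)"
proof -
  obtain S where adj: "is_adjoint (wshift a) S" and sq: "is_pos_sqrt P (\<lambda>x. S (wshift a x))"
    using assms unfolding is_modulus_def by blast
  have "wshift a x \<in> l2" using adj x unfolding is_adjoint_def bdd_op_def by blast
  hence "S (wshift a x) n = complex_of_real ((cmod (a n))\<^sup>2) * x n" for n
    using adjoint_wshift_apply[OF adj] complex_norm_square[of "a n"]
    by (simp add: wshift_def mult.commute del: of_real_power)
  then show ?thesis
    using sq x unfolding is_pos_sqrt_def by auto
qed

lemma modulus_wshift_basis_seq: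
  assumes P: "is_modulus P (wshift a)" and "a n \<noteq> 0"
  shows "P (basis_seq n 1) = basis_seq n (cmod (a n))"
proof -
  have pos: "positive_op P" using P unfolding is_modulus_def is_pos_sqrt_def by blast
  have "P (P (basis_seq n 1)) = (\<lambda>k. complex_of_real ((cmod (a n))\<^sup>2) * basis_seq n 1 k)"
    using modulus_wshift_square[OF P basis_seq_l2] by (auto simp: basis_seq_def)
  then have "P (basis_seq n 1) = (\<lambda>k. complex_of_real (cmod (a n)) * basis_seq n 1 k)"
    using positive_op_sqrt_eigenvector[OF pos basis_seq_l2] assms(2) by simp
  then show ?thesis by (simp add: scale_basis_seq)
qed

lemma polar_wshift_basis_seq:
  assumes polar: "polar_decomp (wshift a) V P" and a: "a n \<noteq> 0"
  shows "V (basis_seq n 1) = basis_seq (Suc n) (sgn (a n))"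
proof -
  have bV: "bdd_op V" using polar unfolding polar_decomp_def partial_isometry_def by simp
  have "basis_seq (Suc n) (a n) = V (P (basis_seq n 1))"
    using polar basis_seq_l2 wshift_basis_seq[of a n 1] unfolding polar_decomp_def by simp
  also have "\<dots> = V (basis_seq n (cmod (a n)))"
    using polar a modulus_wshift_basis_seq unfolding polar_decomp_def by metis
  also have "\<dots> = (\<lambda>k. complex_of_real (cmod (a n)) * V (basis_seq n 1) k)"
    by (rule bdd_op_basis_seq[OF bV])
  finally have "basis_seq (Suc n) (a n) k = complex_of_real (cmod (a n)) * V (basis_seq n 1) k" for k
    by (rule fun_cong)
  then have "V (basis_seq n 1) k = basis_seq (Suc n) (a n) k / complex_of_real (cmod (a n))" for k
    using a by (simp add: field_simps)
  then show ?thesis by (simp add: fun_eq_iff basis_seq_def sgn_eq)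
qed

lemma mean_tr_wshift_basis_seq:
  assumes polar: "polar_decomp (wshift a) V P" and a: "a n \<noteq> 0" "a (Suc n) \<noteq> 0"
  shows "mean_tr V P (basis_seq n c)
    = basis_seq (Suc n) (sgn (a n) * complex_of_real ((cmod (a n) + cmod (a (Suc n))) / 2) * c)"
proof -
  have bV: "bdd_op V" using polar unfolding polar_decomp_def partial_isometry_def by simp
  have mod: "is_modulus P (wshift a)" using polar unfolding polar_decomp_def by simp
  hence bP: "bdd_op P" unfolding is_modulus_def is_pos_sqrt_def positive_op_def by blast
  note V_basis = bdd_op_basis_seq_image[OF bV polar_wshift_basis_seq[OF polar]]
  note P_basis = bdd_op_basis_seq_image[OF bP modulus_wshift_basis_seq[OF mod]]
  show ?thesis
    unfolding mean_tr_def using a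
    by (simp add: V_basis P_basis) (auto simp: fun_eq_iff basis_seq_def field_simps)
qed

lemma two_isometry_shift_weights:
  assumes "two_isometry A" and "\<And>c. A (basis_seq n c) = basis_seq (Suc n) (w n * c)"
    and "\<And>c. A (basis_seq (Suc n) c) = basis_seq (Suc (Suc n)) (w (Suc n) * c)"
  shows "1 - 2 * (cmod (w n))\<^sup>2 + (cmod (w n))\<^sup>2 * (cmod (w (Suc n)))\<^sup>2 = 0"
proof -
  have "(l2norm (basis_seq n 1))\<^sup>2 - 2 * (l2norm (A (basis_seq n 1)))\<^sup>2
        + (l2norm (A (A (basis_seq n 1))))\<^sup>2 = 0"
    using assms(1) basis_seq_l2 unfolding two_isometry_def by blast
  then show ?thesis
    by (simp add: assms(2,3) l2norm_basis_seq norm_mult power_mult_distrib mult.commute)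
qed

lemma isometry_op_wshift:
  assumes "\<And>n. cmod (a n) = 1"
  shows "isometry_op (wshift a)"
  unfolding isometry_op_def
proof
  fix x assume "x \<in> l2"
  hence "(\<lambda>n. (cmod (x n))\<^sup>2) sums (\<Sum>n. (cmod (x n))\<^sup>2)"
    unfolding l2_def by (simp add: summable_sums)
  moreover have "(\<lambda>n. (cmod (wshift a x (Suc n)))\<^sup>2) = (\<lambda>n. (cmod (x n))\<^sup>2)"
    using assms by (simp add: wshift_def norm_mult)
  ultimately have "(\<lambda>n. (cmod (wshift a x n))\<^sup>2) sums (\<Sum>n. (cmod (x n))\<^sup>2)"
    using sums_Suc_iff[of "\<lambda>n. (cmod (wshift a x n))\<^sup>2"] by (simp add: wshift_def)
  thus "l2norm (wshift a x) = l2norm x"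
    unfolding l2norm_def by (simp add: sums_iff)
qed

lemma shift_recursion_mean_eq_1:
  fixes x y z :: real
  assumes pos: "x > 0" "y > 0" "z > 0"
    and e1: "1 - 2*x\<^sup>2 + x\<^sup>2*y\<^sup>2 = 0"
    and e2: "1 - 2*y\<^sup>2 + y\<^sup>2*z\<^sup>2 = 0"
    and e3: "1 - 2*((x+y)/2)\<^sup>2 + ((x+y)/2)\<^sup>2*((y+z)/2)\<^sup>2 = 0"
  shows "x = 1"
proof -
  define p where "p = (x+y)/2"
  define q where "q = (y+z)/2"
  have y2: "y\<^sup>2 = 2 - 1/x\<^sup>2" using e1 pos by (simp add: field_simps)
  have z2: "z\<^sup>2 = 2 - 1/y\<^sup>2" using e2 pos by (simp add: field_simps)
  have q2: "q\<^sup>2 = 2 - 1/p\<^sup>2" using e3 pos unfolding p_def[symmetric] q_def[symmetric]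
    by (simp add: field_simps p_def)
  have convex: "2/p\<^sup>2 \<le> 1/x\<^sup>2 + 1/y\<^sup>2"
  proof -
    have "(4*x*y) * (2*x*y) \<le> (x+y)\<^sup>2 * (x\<^sup>2 + y\<^sup>2)"
      using sum_squares_bound[of x y] pos
      by (intro mult_mono) (auto simp: power2_eq_square algebra_simps)
    hence "8 * x\<^sup>2 * y\<^sup>2 \<le> (x+y)\<^sup>2 * (x\<^sup>2 + y\<^sup>2)"
      by (simp add: power2_eq_square algebra_simps)
    hence "8 / (x+y)\<^sup>2 \<le> (x\<^sup>2 + y\<^sup>2) / (x\<^sup>2*y\<^sup>2)"
      using pos by (simp add: field_simps)
    moreover have "2/p\<^sup>2 = 8 / (x+y)\<^sup>2" unfolding p_def by (simp add: power2_eq_square field_simps)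
    moreover have "1/x\<^sup>2 + 1/y\<^sup>2 = (x\<^sup>2 + y\<^sup>2) / (x\<^sup>2*y\<^sup>2)" using pos by (simp add: field_simps)
    ultimately show ?thesis by simp
  qed
  have "y = z"
  proof (rule ccontr)
    assume "y \<noteq> z"
    hence "(y - z)\<^sup>2 > 0" by simp
    hence "q\<^sup>2 < (y\<^sup>2 + z\<^sup>2)/2" unfolding q_def by (simp add: power2_eq_square field_simps)
    also have "\<dots> \<le> 2 - 1/p\<^sup>2" using convex y2 z2 by simp
    finally show False using q2 by simp
  qed
  hence "(y\<^sup>2 - 1)\<^sup>2 = 0" using e2 by (simp add: power2_eq_square algebra_simps)
  hence "x\<^sup>2 = 1" using e1 by simp
  thus "x = 1" using pos by (simp add: power2_eq_1_iff)
qed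

theorem mainTheorem14:
  fixes a :: "nat \<Rightarrow> complex"
    and V P Q :: "(nat \<Rightarrow> complex) \<Rightarrow> (nat \<Rightarrow> complex)"
  assumes bounded: "\<exists>B. \<forall>j. cmod (a j) \<le> B"
    and polar: "polar_decomp (wshift a) V P"
    and sqrtP: "is_pos_sqrt Q P"
    and T2: "two_isometry (wshift a)"
    and M2: "two_isometry (mean_tr V P)"
  shows "isometry_op (wshift a) \<and>
         (\<forall>x\<in>l2. wshift a x = aluthge V Q x) \<and>
         (\<forall>x\<in>l2. aluthge V Q x = mean_tr V P x)"
proof -
  define r where "r n = cmod (a n)" for n
  have T_rec: "1 - 2 * (r n)\<^sup>2 + (r n)\<^sup>2 * (r (Suc n))\<^sup>2 = 0" for n
    using two_isometry_shift_weights[OF T2] wshift_basis_seq unfolding r_def by blast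
  have a: "a n \<noteq> 0" for n
    using T_rec[of n] by (auto simp: r_def)
  define m where "m n = (r n + r (Suc n)) / 2" for n
  have M_basis: "mean_tr V P (basis_seq n c) = basis_seq (Suc n) (sgn (a n) * complex_of_real (m n) * c)"
    for n c using mean_tr_wshift_basis_seq[OF polar a a] unfolding m_def r_def .
  have "cmod (sgn (a n) * complex_of_real (m n)) = m n" for n
    using a by (simp add: norm_mult norm_sgn m_def r_def del: of_real_add)
  then have M_rec: "1 - 2 * (m n)\<^sup>2 + (m n)\<^sup>2 * (m (Suc n))\<^sup>2 = 0" for n
    using two_isometry_shift_weights[OF M2 M_basis M_basis] by simp
  have r1: "cmod (a n) = 1" for n
    using shift_recursion_mean_eq_1[OF _ _ _ T_rec T_rec M_rec[unfolded m_def]] a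
    unfolding r_def by simp
  have P: "is_modulus P (wshift a)" "positive_op P"
    using polar unfolding polar_decomp_def is_modulus_def is_pos_sqrt_def by auto
  have P_id: "P x = x" if "x \<in> l2" for x
    using positive_op_square_id[OF P(2) that] modulus_wshift_square[OF P(1) that] r1 by simp
  have Q_id: "Q x = x" if "x \<in> l2" for x
    using positive_op_square_id[of Q x] sqrtP P_id that unfolding is_pos_sqrt_def by simp
  have V_T: "V x = wshift a x" if "x \<in> l2" for x
    using polar P_id that unfolding polar_decomp_def by simp
  have "wshift a x \<in> l2" if "x \<in> l2" for x
    using polar that unfolding polar_decomp_def is_modulus_def is_adjoint_def bdd_op_def by blast
  then show ?thesis
    using isometry_op_wshift[OF r1] by (simp add: aluthge_def mean_tr_def P_id Q_id V_T)
qed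

end
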